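(* Assume $p_0\in(0,1)$, $p_j\in(0,1)$ and $\tau_j=\frac{p_0}{p_0+2(1-p_0)p_j}$ for $j=1,\dots,k$. Then for every $\Theta\in\mathbb R^{nd}$, $$\mathbb E_\xi\|G(\Theta)\|^2\le 4\mathcal L\big(F(\Theta)-F(\hat\Theta)\big)+2\sigma^2_{\hat\Theta}.$$
   Context: Clients $1,\dots,n$ are partitioned into nonempty disjoint clusters $\mathcal I_1,\dots,\mathcal I_k$; $d\ge1$. Each $f_i:\mathbb R^d\to\mathbb R$ is differentiable, $\mu$-strongly convex and $L$-smooth ($0<\mu\le L$). Fix $\gamma_i>0$ and $\alpha_j\in[0,1]$, not all $\alpha_j=0$. For $\Theta=(\theta_1,\dots,\theta_n)$ let $\Theta_j$ be the stacked vector of $\theta_i$, $i\in\mathcal I_j$; define $\bar\theta_j=\frac{\sum_{i\in\mathcal I_j}\gamma_i\theta_i}{\sum_{i\in\mathcal I_j}\gamma_i}$, $\bar\theta=\frac{\sum_{j}\sum_{i\in\mathcal I_j}\alpha_j\gamma_i\theta_i}{\sum_{j}\sum_{i\in\mathcal I_j}\alpha_j\gamma_i}$, $\psi_j(\Theta_j)=\frac12\sum_{i\in\mathcal I_j}\gamma_i\|\theta_i-\bar\theta_j\|^2$, $\varphi(\Theta)=\frac12\sum_{j}\alpha_j\sum_{i\in\mathcal I_j}\gamma_i\|\theta_i-\bar\theta\|^2$, $F_j(\Theta_j)=\sum_{i\in\mathcal I_j}f_i(\theta_i)$, and $F(\Theta)=\sum_jF_j(\Theta_j)+\sum_j(1-\alpha_j)\psi_j(\Theta_j)+\varphi(\Theta)$;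 $\hat\Theta$ is its unique minimizer. Gradient oracle: $\xi=(\xi_0,\dots,\xi_k)$ independent Bernoulli with $\mathbb P(\xi_j=1)=p_j$; $G(\Theta)=(G_1,\dots,G_n)$ with, for $i\in\mathcal I_j$: $G_i=\frac{\gamma_i\alpha_j}{p_0}(\theta_i-\bar\theta)+\frac{\gamma_i\tau_j(1-\alpha_j)}{p_0}(\theta_i-\bar\theta_j)$ if $\xi_0=1$; $G_i=\frac{\gamma_i(1-\tau_j)(1-\alpha_j)}{(1-p_0)p_j}(\theta_i-\bar\theta_j)$ if $\xi_0=0,\xi_j=1$; $G_i=\frac{1}{(1-p_0)(1-p_j)}\nabla f_i(\theta_i)$ if $\xi_0=\xi_j=0$. Define $\mathcal L=\max\big\{\frac{2}{p_0}\max_{j}\max_{i\in\mathcal I_j}\alpha_j\gamma_i,\ \max_{j}\frac{2(1-\alpha_j)\max_{i\in\mathcal I_j}\gamma_i}{p_0+2(1-p_0)p_j},\ \frac{L}{1-p_0}\max_{j}\frac{1}{1-p_j}\big\}$ and $\sigma^2_{\hat\Theta}=\frac{2}{p_0}\|\nabla\varphi(\hat\Theta)\|^2+\sum_{j=1}^k\frac{2(1-\alpha_j)^2}{p_0+2(1-p_0)p_j}\|\nabla\psi_j(\hat\Theta_j)\|^2+\frac{1}{1-p_0}\sum_{j=1}^k\frac{1}{1-p_j}\|\nabla F_j(\hat\Theta_j)\|^2$. *)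

theory Defs
  imports "HOL-Analysis.Analysis"
begin

(* Gradient of a real-valued function on a Euclidean space (Riesz representer of the
   Frechet derivative); well defined whenever the function is differentiable. *)
definition grad :: "('a::euclidean_space \<Rightarrow> real) \<Rightarrow> 'a \<Rightarrow> 'a" where
  "grad g x = (SOME v. (g has_derivative (\<lambda>h. v \<bullet> h)) (at x))"

definition strongly_convex :: "real \<Rightarrow> ('a::euclidean_space \<Rightarrow> real) \<Rightarrow> bool" where
  "strongly_convex mu g \<longleftrightarrow> (\<forall>x y. \<forall>t\<in>{0..1}.
      g (t *\<^sub>R x + (1 - t) *\<^sub>R y) \<le> t * g x + (1 - t) * g y - mu / 2 * t * (1 - t) * (norm (x - y))^2)"

definition smooth :: "real \<Rightarrow> ('a::euclidean_space \<Rightarrow> real) \<Rightarrow> bool" where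
  "smooth L g \<longleftrightarrow> (\<forall>x. g differentiable (at x)) \<and> L-lipschitz_on UNIV (grad g)"

(* Clients are the elements of the finite type 'n, clusters the elements of the finite
   type 'k; cl i is the cluster of client i.  Theta :: 'd^'n stacks the theta_i. *)

definition cluster_mean :: "('n::finite \<Rightarrow> real) \<Rightarrow> ('n \<Rightarrow> 'k) \<Rightarrow> 'd::euclidean_space^'n \<Rightarrow> 'k \<Rightarrow> 'd" where
  "cluster_mean \<gamma> cl \<Theta> j =
     (\<Sum>i\<in>{i. cl i = j}. \<gamma> i *\<^sub>R (\<Theta> $ i)) /\<^sub>R (\<Sum>i\<in>{i. cl i = j}. \<gamma> i)"

definition global_mean :: "('k::finite \<Rightarrow> real) \<Rightarrow> ('n::finite \<Rightarrow> real) \<Rightarrow> ('n \<Rightarrow> 'k) \<Rightarrow> 'd::euclidean_space^'n \<Rightarrow> 'd" where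
  "global_mean \<alpha> \<gamma> cl \<Theta> =
     (\<Sum>j\<in>UNIV. \<Sum>i\<in>{i. cl i = j}. (\<alpha> j * \<gamma> i) *\<^sub>R (\<Theta> $ i)) /\<^sub>R
     (\<Sum>j\<in>UNIV. \<Sum>i\<in>{i. cl i = j}. \<alpha> j * \<gamma> i)"

(* psi_j, viewed as a function of the full Theta (it only depends on Theta_j) *)
definition psi :: "('n::finite \<Rightarrow> real) \<Rightarrow> ('n \<Rightarrow> 'k) \<Rightarrow> 'k \<Rightarrow> 'd::euclidean_space^'n \<Rightarrow> real" where
  "psi \<gamma> cl j \<Theta> = 1/2 * (\<Sum>i\<in>{i. cl i = j}. \<gamma> i * (norm (\<Theta> $ i - cluster_mean \<gamma> cl \<Theta> j))^2)"

definition phi :: "('k::finite \<Rightarrow> real) \<Rightarrow> ('n::finite \<Rightarrow> real) \<Rightarrow> ('n \<Rightarrow> 'k) \<Rightarrow> 'd::euclidean_space^'n \<Rightarrow> real" where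
  "phi \<alpha> \<gamma> cl \<Theta> = 1/2 * (\<Sum>j\<in>UNIV. \<alpha> j * (\<Sum>i\<in>{i. cl i = j}. \<gamma> i * (norm (\<Theta> $ i - global_mean \<alpha> \<gamma> cl \<Theta>))^2))"

(* F_j, viewed as a function of the full Theta (it only depends on Theta_j) *)
definition Fc :: "('n::finite \<Rightarrow> 'd::euclidean_space \<Rightarrow> real) \<Rightarrow> ('n \<Rightarrow> 'k) \<Rightarrow> 'k \<Rightarrow> 'd^'n \<Rightarrow> real" where
  "Fc f cl j \<Theta> = (\<Sum>i\<in>{i. cl i = j}. f i (\<Theta> $ i))"

definition Fobj :: "('n::finite \<Rightarrow> 'd::euclidean_space \<Rightarrow> real) \<Rightarrow> ('k::finite \<Rightarrow> real) \<Rightarrow> ('n \<Rightarrow> real) \<Rightarrow> ('n \<Rightarrow> 'k) \<Rightarrow> 'd^'n \<Rightarrow> real" where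
  "Fobj f \<alpha> \<gamma> cl \<Theta> = (\<Sum>j\<in>UNIV. Fc f cl j \<Theta>) + (\<Sum>j\<in>UNIV. (1 - \<alpha> j) * psi \<gamma> cl j \<Theta>) + phi \<alpha> \<gamma> cl \<Theta>"

(* The stochastic gradient G(Theta) for the outcome (xi0, xi) of the coins xi_0 and xi_j, j in 'k *)
definition Gorc :: "('n::finite \<Rightarrow> 'd::euclidean_space \<Rightarrow> real) \<Rightarrow> ('k::finite \<Rightarrow> real) \<Rightarrow> ('n \<Rightarrow> real) \<Rightarrow> ('n \<Rightarrow> 'k)
    \<Rightarrow> real \<Rightarrow> ('k \<Rightarrow> real) \<Rightarrow> ('k \<Rightarrow> real) \<Rightarrow> bool \<Rightarrow> ('k \<Rightarrow> bool) \<Rightarrow> 'd^'n \<Rightarrow> 'd^'n" where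
  "Gorc f \<alpha> \<gamma> cl p0 p \<tau> xi0 xi \<Theta> = (\<chi> i. let j = cl i in
     if xi0 then
       (\<gamma> i * \<alpha> j / p0) *\<^sub>R (\<Theta> $ i - global_mean \<alpha> \<gamma> cl \<Theta>)
       + (\<gamma> i * \<tau> j * (1 - \<alpha> j) / p0) *\<^sub>R (\<Theta> $ i - cluster_mean \<gamma> cl \<Theta> j)
     else if xi j then
       (\<gamma> i * (1 - \<tau> j) * (1 - \<alpha> j) / ((1 - p0) * p j)) *\<^sub>R (\<Theta> $ i - cluster_mean \<gamma> cl \<Theta> j)
     else
       (1 / ((1 - p0) * (1 - p j))) *\<^sub>R grad (f i) (\<Theta> $ i))"

(* E_xi ||G(Theta)||^2 for independent Bernoulli xi_0 ~ B(p0), xi_j ~ B(p j):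
   the expectation over the finite product distribution written as a weighted sum. *)
definition EGsq :: "('n::finite \<Rightarrow> 'd::euclidean_space \<Rightarrow> real) \<Rightarrow> ('k::finite \<Rightarrow> real) \<Rightarrow> ('n \<Rightarrow> real) \<Rightarrow> ('n \<Rightarrow> 'k)
    \<Rightarrow> real \<Rightarrow> ('k \<Rightarrow> real) \<Rightarrow> ('k \<Rightarrow> real) \<Rightarrow> 'd^'n \<Rightarrow> real" where
  "EGsq f \<alpha> \<gamma> cl p0 p \<tau> \<Theta> =
     (\<Sum>xi0\<in>(UNIV::bool set). \<Sum>xi\<in>(UNIV::('k \<Rightarrow> bool) set).
        ((if xi0 then p0 else 1 - p0) * (\<Prod>j\<in>UNIV. if xi j then p j else 1 - p j))
        * (norm (Gorc f \<alpha> \<gamma> cl p0 p \<tau> xi0 xi \<Theta>))^2)"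

definition LLcal :: "real \<Rightarrow> ('k::finite \<Rightarrow> real) \<Rightarrow> ('n::finite \<Rightarrow> real) \<Rightarrow> ('n \<Rightarrow> 'k) \<Rightarrow> real \<Rightarrow> ('k \<Rightarrow> real) \<Rightarrow> real" where
  "LLcal L \<alpha> \<gamma> cl p0 p = Max {
     2 / p0 * Max ((\<lambda>j. Max ((\<lambda>i. \<alpha> j * \<gamma> i) ` {i. cl i = j})) ` UNIV),
     Max ((\<lambda>j. 2 * (1 - \<alpha> j) * Max (\<gamma> ` {i. cl i = j}) / (p0 + 2 * (1 - p0) * p j)) ` UNIV),
     L / (1 - p0) * Max ((\<lambda>j. 1 / (1 - p j)) ` UNIV)}"

definition sigma2 :: "('n::finite \<Rightarrow> 'd::euclidean_space \<Rightarrow> real) \<Rightarrow> ('k::finite \<Rightarrow> real) \<Rightarrow> ('n \<Rightarrow> real) \<Rightarrow> ('n \<Rightarrow> 'k)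
    \<Rightarrow> real \<Rightarrow> ('k \<Rightarrow> real) \<Rightarrow> 'd^'n \<Rightarrow> real" where
  "sigma2 f \<alpha> \<gamma> cl p0 p \<Theta>h =
     2 / p0 * (norm (grad (phi \<alpha> \<gamma> cl) \<Theta>h))^2
     + (\<Sum>j\<in>UNIV. 2 * (1 - \<alpha> j)^2 / (p0 + 2 * (1 - p0) * p j) * (norm (grad (psi \<gamma> cl j) \<Theta>h))^2)
     + 1 / (1 - p0) * (\<Sum>j\<in>UNIV. 1 / (1 - p j) * (norm (grad (Fc f cl j) \<Theta>h))^2)"

end

theory Submission
  imports Defs
begin

text \<open>
  Client i's share of E\<parallel>G(\<Theta>)\<parallel>^2 is a positive semidefinite quadratic form in
  the client's components of \<nabla>\<phi>(\<Theta>), \<nabla>\<psi>_j(\<Theta>) and \<nabla>f_i(\<theta>_i). Writing \<Theta> = (\<Theta> - \<Theta>h) + \<Theta>h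
  costs a factor 2. For the given \<tau>_j, Young's inequality bounds the form at \<Theta>h by exactly the
  client's share of \<sigma>^2. At \<Theta> - \<Theta>h, the quadratics \<phi> and \<psi>_j have gradient norms controlled by
  \<phi>(\<Theta> - \<Theta>h) and \<psi>_j(\<Theta> - \<Theta>h), while co-coercivity of the smooth convex f_i controls
  \<parallel>\<nabla>f_i(\<theta>_i) - \<nabla>f_i(\<theta>h_i)\<parallel>^2 by a Bregman divergence. Since \<nabla>F(\<Theta>h) = 0, these quadratic
  terms and divergences add up exactly to F(\<Theta>) - F(\<Theta>h).
\<close>

lemma sum_product_weights_one_coordinate:
  fixes q :: "'k::finite \<Rightarrow> bool \<Rightarrow> real" and h :: "bool \<Rightarrow> real"
  assumes "\<And>j. q j True + q j False = 1"
  shows "(\<Sum>xi\<in>(UNIV::('k \<Rightarrow> bool) set). (\<Prod>j\<in>UNIV. q j (xi j)) * h (xi j0))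
         = q j0 True * h True + q j0 False * h False"
proof -
  define g where "g j b = q j b * (if j = j0 then h b else 1)" for j b
  have "(\<Sum>xi\<in>(UNIV::('k \<Rightarrow> bool) set). (\<Prod>j\<in>UNIV. q j (xi j)) * h (xi j0))
      = (\<Sum>xi\<in>PiE UNIV (\<lambda>_. UNIV). \<Prod>j\<in>UNIV. g j (xi j))"
  proof (rule sum.cong)
    fix xi :: "'k \<Rightarrow> bool"
    have "(\<Prod>j\<in>UNIV. if j = j0 then h (xi j) else 1) = h (xi j0)"
      by (subst prod.If_cases) auto
    then show "(\<Prod>j\<in>UNIV. q j (xi j)) * h (xi j0) = (\<Prod>j\<in>UNIV. g j (xi j))"
      unfolding g_def by (simp add: prod.distrib)
  qed simp
  also have "\<dots> = (\<Prod>j\<in>UNIV. \<Sum>b\<in>UNIV. g j b)"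
    by (rule prod_sum_PiE[symmetric]) auto
  also have "\<dots> = (\<Prod>j\<in>UNIV. if j = j0 then q j0 True * h True + q j0 False * h False else 1)"
    using assms by (intro prod.cong) (auto simp: g_def UNIV_bool add.commute)
  also have "\<dots> = q j0 True * h True + q j0 False * h False"
    by (subst prod.If_cases) auto
  finally show ?thesis .
qed

lemma power2_norm_vec: "(norm (x::'a::real_normed_vector^'n::finite))\<^sup>2 = (\<Sum>i\<in>UNIV. (norm (x $ i))\<^sup>2)"
  unfolding norm_vec_def L2_set_def by (simp add: sum_nonneg)

lemma power2_norm_scaleR: "(norm (c *\<^sub>R (v::'a::real_normed_vector)))\<^sup>2 = c\<^sup>2 * (norm v)\<^sup>2"
  by (simp add: power_mult_distrib)

lemma power2_norm_add_le: "(norm (a + b))\<^sup>2 \<le> 2 * (norm a)\<^sup>2 + 2 * (norm (b::'a::real_inner))\<^sup>2"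
proof -
  have "(norm (a + b))\<^sup>2 + (norm (a - b))\<^sup>2 = 2 * (norm a)\<^sup>2 + 2 * (norm b)\<^sup>2"
    by (simp add: power2_norm_eq_inner inner_add_left inner_add_right inner_diff_left
        inner_diff_right inner_commute)
  then show ?thesis by (smt (verit) zero_le_power2)
qed

subsection \<open>Weighted means and dispersions of stacked vectors\<close>

definition wmean :: "('n::finite \<Rightarrow> real) \<Rightarrow> 'd::euclidean_space^'n \<Rightarrow> 'd" where
  "wmean c \<Theta> = (\<Sum>i\<in>UNIV. c i *\<^sub>R (\<Theta> $ i)) /\<^sub>R (\<Sum>i\<in>UNIV. c i)"

definition wvar :: "('n::finite \<Rightarrow> real) \<Rightarrow> 'd::euclidean_space^'n \<Rightarrow> real" where
  "wvar c \<Theta> = 1/2 * (\<Sum>i\<in>UNIV. c i * (norm (\<Theta> $ i - wmean c \<Theta>))\<^sup>2)"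

definition wvar_grad :: "('n::finite \<Rightarrow> real) \<Rightarrow> 'd::euclidean_space^'n \<Rightarrow> 'd^'n" where
  "wvar_grad c \<Theta> = (\<chi> i. c i *\<^sub>R (\<Theta> $ i - wmean c \<Theta>))"

lemma wmean_add: "wmean c (x + y) = wmean c x + wmean c y"
  unfolding wmean_def by (simp add: scaleR_add_right sum.distrib algebra_simps)

lemma wmean_diff: "wmean c (x - y) = wmean c x - wmean c y"
  unfolding wmean_def by (simp add: scaleR_diff_right sum_subtractf algebra_simps)

lemma wmean_scaleR: "wmean c (a *\<^sub>R x) = a *\<^sub>R wmean c x"
  unfolding wmean_def by (simp add: scaleR_sum_right algebra_simps)

lemma wvar_grad_diff: "wvar_grad c (x - y) = wvar_grad c x - wvar_grad c y"
  unfolding wvar_grad_def by (simp add: wmean_diff vec_eq_iff algebra_simps)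

lemma sum_weighted_deviations:
  assumes "(\<Sum>i\<in>UNIV. c i) \<noteq> 0"
  shows "(\<Sum>i\<in>UNIV. c i *\<^sub>R (y $ i - wmean c y)) = 0"
proof -
  have "(\<Sum>i\<in>UNIV. c i) *\<^sub>R wmean c y = (\<Sum>i\<in>UNIV. c i *\<^sub>R y $ i)"
    using assms unfolding wmean_def by simp
  then show ?thesis
    by (simp add: scaleR_diff_right sum_subtractf scaleR_sum_left)
qed

lemma sum_weighted_deviation_products:
  assumes "(\<Sum>i\<in>UNIV. c i) \<noteq> 0"
  shows "(\<Sum>i\<in>UNIV. c i * ((y $ i - wmean c y) \<bullet> (z $ i - wmean c z))) = wvar_grad c y \<bullet> z"
proof -
  have "(\<Sum>i\<in>UNIV. c i * ((y $ i - wmean c y) \<bullet> (z $ i - wmean c z)))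
      = (\<Sum>i\<in>UNIV. c i * ((y $ i - wmean c y) \<bullet> z $ i))
        - (\<Sum>i\<in>UNIV. c i *\<^sub>R (y $ i - wmean c y)) \<bullet> wmean c z"
    by (simp add: inner_diff_right right_diff_distrib sum_subtractf inner_sum_left)
  then show ?thesis
    by (simp add: sum_weighted_deviations[OF assms] wvar_grad_def inner_vec_def)
qed

lemma wvar_taylor:
  assumes "(\<Sum>i\<in>UNIV. c i) \<noteq> 0"
  shows "wvar c x - wvar c y - wvar_grad c y \<bullet> (x - y) = wvar c (x - y)"
proof -
  define e where "e = x - y"
  have dev: "x $ i - wmean c x = (y $ i - wmean c y) + (e $ i - wmean c e)" for i
    unfolding e_def wmean_diff by simp
  have "(\<Sum>i\<in>UNIV. c i * (norm (x $ i - wmean c x))\<^sup>2)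
      = (\<Sum>i\<in>UNIV. c i * (norm (y $ i - wmean c y))\<^sup>2)
        + 2 * (\<Sum>i\<in>UNIV. c i * ((y $ i - wmean c y) \<bullet> (e $ i - wmean c e)))
        + (\<Sum>i\<in>UNIV. c i * (norm (e $ i - wmean c e))\<^sup>2)"
    unfolding dev
    by (simp add: power2_norm_eq_inner inner_add_left inner_add_right inner_commute
        distrib_left sum.distrib sum_distrib_left mult.left_commute)
  then show ?thesis
    unfolding wvar_def sum_weighted_deviation_products[OF assms] e_def by linarith
qed

lemma has_derivative_wvar:
  fixes c :: "'n::finite \<Rightarrow> real" and \<Theta> :: "'d::euclidean_space^'n"
  assumes "(\<Sum>i\<in>UNIV. c i) \<noteq> 0"
  shows "(wvar c has_derivative (\<lambda>h. wvar_grad c \<Theta> \<bullet> h)) (at \<Theta>)"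
proof -
  have "linear (\<lambda>\<Theta>::'d^'n. \<Theta> $ i - wmean c \<Theta>)" for i
    by (rule linearI) (simp_all add: wmean_add wmean_scaleR algebra_simps)
  then have dev: "((\<lambda>\<Theta>. \<Theta> $ i - wmean c \<Theta>) has_derivative (\<lambda>h. h $ i - wmean c h)) (at \<Theta>)" for i
    by (simp add: linear_conv_bounded_linear bounded_linear_imp_has_derivative)
  have wvar_eq: "wvar c = (\<lambda>\<Theta>. 1/2 * (\<Sum>i\<in>UNIV. c i * ((\<Theta> $ i - wmean c \<Theta>) \<bullet> (\<Theta> $ i - wmean c \<Theta>))))"
    unfolding wvar_def by (simp add: power2_norm_eq_inner)
  have "(wvar c has_derivative (\<lambda>h. 1/2 * (\<Sum>i\<in>UNIV. c i *
      ((\<Theta> $ i - wmean c \<Theta>) \<bullet> (h $ i - wmean c h) + (h $ i - wmean c h) \<bullet> (\<Theta> $ i - wmean c \<Theta>)))))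
      (at \<Theta>)"
    unfolding wvar_eq by (intro has_derivative_mult_right has_derivative_sum has_derivative_inner dev)
  moreover have "1/2 * (\<Sum>i\<in>UNIV. c i *
      ((\<Theta> $ i - wmean c \<Theta>) \<bullet> (h $ i - wmean c h) + (h $ i - wmean c h) \<bullet> (\<Theta> $ i - wmean c \<Theta>)))
      = wvar_grad c \<Theta> \<bullet> h" for h
    unfolding sum_weighted_deviation_products[OF assms, symmetric]
    by (simp add: inner_commute sum_distrib_left algebra_simps)
  ultimately show ?thesis by simp
qed

subsection \<open>Gradients, convexity and smoothness\<close>

lemma grad_eqI:
  assumes "(g has_derivative (\<lambda>h. v \<bullet> h)) (at x)"
  shows "grad g x = v"
proof -
  have "(g has_derivative (\<lambda>h. grad g x \<bullet> h)) (at x)"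
    unfolding grad_def by (rule someI[of _ v]) (rule assms)
  then have "(\<lambda>h. grad g x \<bullet> h) = (\<lambda>h. v \<bullet> h)"
    using assms by (rule has_derivative_unique)
  then have "(grad g x - v) \<bullet> (grad g x - v) = 0"
    by (metis inner_diff_left right_minus_eq)
  then show ?thesis by simp
qed

lemma has_derivative_grad:
  fixes g :: "'a::euclidean_space \<Rightarrow> real"
  assumes "g differentiable (at x)"
  shows "(g has_derivative (\<lambda>h. grad g x \<bullet> h)) (at x)"
proof -
  obtain D where D: "(g has_derivative D) (at x)"
    using assms unfolding differentiable_def by blast
  then have "linear D" by (simp add: has_derivative_linear)
  define v where "v = (\<Sum>b\<in>Basis. D b *\<^sub>R b)"
  have "v \<bullet> h = D h" for h
  proof -
    have "v \<bullet> h = (\<Sum>b\<in>Basis. D b * (b \<bullet> h))"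
      unfolding v_def by (simp add: inner_sum_left)
    also have "\<dots> = (\<Sum>b\<in>Basis. D ((h \<bullet> b) *\<^sub>R b))"
      using \<open>linear D\<close> by (simp add: linear_cmul inner_commute mult.commute)
    also have "\<dots> = D (\<Sum>b\<in>Basis. (h \<bullet> b) *\<^sub>R b)"
      using linear_sum[OF \<open>linear D\<close>] by metis
    also have "\<dots> = D h" by (simp add: euclidean_representation)
    finally show ?thesis .
  qed
  then have "(g has_derivative (\<lambda>h. v \<bullet> h)) (at x)" using D by simp
  then show ?thesis using grad_eqI by metis
qed

lemma has_real_derivative_along_line:
  fixes f :: "'a::euclidean_space \<Rightarrow> real"
  assumes "\<And>x. f differentiable (at x)"
  shows "((\<lambda>t. f (x + t *\<^sub>R v)) has_real_derivative (grad f (x + t *\<^sub>R v) \<bullet> v)) (at t)"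
proof -
  have "((\<lambda>t. x + t *\<^sub>R v) has_derivative (\<lambda>s. s *\<^sub>R v)) (at t)"
    by (auto intro!: derivative_eq_intros)
  then have "((\<lambda>t. f (x + t *\<^sub>R v)) has_derivative (\<lambda>s. grad f (x + t *\<^sub>R v) \<bullet> (s *\<^sub>R v))) (at t)"
    using has_derivative_grad[OF assms] by (rule has_derivative_compose)
  moreover have "(\<lambda>s. grad f (x + t *\<^sub>R v) \<bullet> (s *\<^sub>R v)) = (*) (grad f (x + t *\<^sub>R v) \<bullet> v)"
    by (rule ext) (simp add: mult.commute)
  ultimately show ?thesis
    unfolding has_field_derivative_def by simp
qed

lemma strongly_convex_first_order:
  fixes f :: "'a::euclidean_space \<Rightarrow> real"
  assumes sc: "strongly_convex \<mu> f" and mu: "0 \<le> \<mu>" and d: "\<And>x. f differentiable (at x)"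
  shows "f x + grad f x \<bullet> (y - x) \<le> f y"
proof -
  define v where "v = y - x"
  define g where "g t = f (x + t *\<^sub>R v)" for t
  have "(g has_real_derivative (grad f x \<bullet> v)) (at 0)"
    using has_real_derivative_along_line[OF d, of x v 0] unfolding g_def by simp
  then have "((\<lambda>t. (g t - g 0) / (t - 0)) \<longlongrightarrow> grad f x \<bullet> v) (at_right 0)"
    using has_field_derivative_iff tendsto_mono[OF at_le] by blast
  moreover have "eventually (\<lambda>t. (g t - g 0) / (t - 0) \<le> f y - f x) (at_right (0::real))"
    unfolding eventually_at_right_field
  proof (intro exI[of _ 1] conjI allI impI)
    fix t :: real assume t: "0 < t" "t < 1"
    have "f (t *\<^sub>R y + (1 - t) *\<^sub>R x) \<le> t * f y + (1 - t) * f x - \<mu> / 2 * t * (1 - t) * (norm (y - x))\<^sup>2"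
      using sc t unfolding strongly_convex_def by auto
    moreover have "0 \<le> \<mu> / 2 * t * (1 - t) * (norm (y - x))\<^sup>2" using mu t by simp
    moreover have "t *\<^sub>R y + (1 - t) *\<^sub>R x = x + t *\<^sub>R v" unfolding v_def by (simp add: algebra_simps)
    ultimately have "g t \<le> t * f y + (1 - t) * f x" unfolding g_def by simp
    then have "g t - g 0 \<le> t * (f y - f x)" unfolding g_def by (simp add: algebra_simps)
    then show "(g t - g 0) / (t - 0) \<le> f y - f x" using t by (simp add: divide_le_eq mult.commute)
  qed simp
  ultimately have "grad f x \<bullet> v \<le> f y - f x"
    by (rule tendsto_upperbound) simp
  then show ?thesis unfolding v_def by simp
qed

lemma smooth_descent:
  fixes f :: "'a::euclidean_space \<Rightarrow> real"
  assumes "smooth L f"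
  shows "f z \<le> f x + grad f x \<bullet> (z - x) + L / 2 * (norm (z - x))\<^sup>2"
proof -
  have d: "\<And>x. f differentiable (at x)" and lip: "L-lipschitz_on UNIV (grad f)"
    using assms unfolding smooth_def by auto
  define v where "v = z - x"
  define h where "h t = f (x + t *\<^sub>R v) - t * (grad f x \<bullet> v) - L / 2 * t\<^sup>2 * (norm v)\<^sup>2" for t
  have "h 1 \<le> h 0"
  proof (rule DERIV_nonpos_imp_nonincreasing[of 0 1 h])
    fix t :: real assume t: "0 \<le> t" "t \<le> 1"
    have D: "(h has_real_derivative
        (grad f (x + t *\<^sub>R v) \<bullet> v - grad f x \<bullet> v - L * t * (norm v)\<^sup>2)) (at t)"
      unfolding h_def
      by (rule derivative_eq_intros has_real_derivative_along_line[OF d] refl | simp)+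
    have "norm (grad f (x + t *\<^sub>R v) - grad f x) \<le> L * norm (t *\<^sub>R v)"
      using lipschitz_onD[OF lip, of "x + t *\<^sub>R v" x] by (simp add: dist_norm)
    then have "norm (grad f (x + t *\<^sub>R v) - grad f x) * norm v \<le> L * norm (t *\<^sub>R v) * norm v"
      by (simp add: mult_right_mono)
    also have "\<dots> = L * t * (norm v)\<^sup>2"
      using t by (simp add: power2_eq_square)
    finally have "norm (grad f (x + t *\<^sub>R v) - grad f x) * norm v \<le> L * t * (norm v)\<^sup>2" .
    moreover have "grad f (x + t *\<^sub>R v) \<bullet> v - grad f x \<bullet> v
        \<le> norm (grad f (x + t *\<^sub>R v) - grad f x) * norm v"
      by (metis inner_diff_left norm_cauchy_schwarz)
    ultimately show "\<exists>y. (h has_real_derivative y) (at t) \<and> y \<le> 0"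
      using D by auto
  qed simp
  then show ?thesis unfolding h_def v_def by simp
qed

definition bregman :: "('a::euclidean_space \<Rightarrow> real) \<Rightarrow> 'a \<Rightarrow> 'a \<Rightarrow> real" where
  "bregman f x y = f x - f y - grad f y \<bullet> (x - y)"

lemma bregman_nonneg:
  assumes "strongly_convex \<mu> f" "0 \<le> \<mu>" "\<And>x. f differentiable (at x)"
  shows "0 \<le> bregman f x y"
  using strongly_convex_first_order[OF assms, of y x] unfolding bregman_def by simp

text \<open>Co-coercivity: compare the first-order bound at \<open>y\<close> with the descent bound at
  \<open>x\<close> after a gradient step \<open>z = x - (\<nabla>f x - \<nabla>f y) / L\<close>.\<close>
lemma power2_norm_grad_diff_le_bregman:
  fixes f :: "'a::euclidean_space \<Rightarrow> real"
  assumes sc: "strongly_convex \<mu> f" and mu: "0 \<le> \<mu>" and sm: "smooth L f" and L: "0 < L"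
  shows "(norm (grad f x - grad f y))\<^sup>2 \<le> 2 * L * bregman f x y"
proof -
  have d: "\<And>x. f differentiable (at x)" using sm unfolding smooth_def by auto
  define dd where "dd = grad f x - grad f y"
  define z where "z = x - (1 / L) *\<^sub>R dd"
  have lower: "f y + grad f y \<bullet> (z - y) \<le> f z"
    by (rule strongly_convex_first_order[OF sc mu d])
  have upper: "f z \<le> f x + grad f x \<bullet> (z - x) + L / 2 * (norm (z - x))\<^sup>2"
    by (rule smooth_descent[OF sm])
  have "grad f y \<bullet> (z - y) = grad f y \<bullet> (x - y) - (1 / L) * (grad f y \<bullet> dd)"
    unfolding z_def by (simp add: inner_diff_right algebra_simps)
  moreover have "grad f x \<bullet> (z - x) = - (1 / L) * (grad f x \<bullet> dd)"
    unfolding z_def by (simp add: inner_diff_right)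
  moreover have "L / 2 * (norm (z - x))\<^sup>2 = (1 / (2 * L)) * (norm dd)\<^sup>2"
    unfolding z_def using L by (simp add: power2_eq_square field_simps)
  ultimately have "f y + grad f y \<bullet> (x - y) + (1 / L) * (grad f x \<bullet> dd - grad f y \<bullet> dd)
      - (1 / (2 * L)) * (norm dd)\<^sup>2 \<le> f x"
    using lower upper by (simp add: algebra_simps)
  moreover have "grad f x \<bullet> dd - grad f y \<bullet> dd = (norm dd)\<^sup>2"
    unfolding dd_def by (simp add: power2_norm_eq_inner inner_diff_left)
  ultimately have "f y + grad f y \<bullet> (x - y) + (1 / L) * (norm dd)\<^sup>2 - (1 / (2 * L)) * (norm dd)\<^sup>2 \<le> f x"
    by simp
  moreover have "(1 / L) * (norm dd)\<^sup>2 - (1 / (2 * L)) * (norm dd)\<^sup>2 = (1 / (2 * L)) * (norm dd)\<^sup>2"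
    using L by (simp add: field_simps)
  ultimately have "(1 / (2 * L)) * (norm dd)\<^sup>2 \<le> bregman f x y"
    unfolding bregman_def by linarith
  then show ?thesis unfolding dd_def using L by (simp add: field_simps)
qed

subsection \<open>The expected squared norm of one client's oracle output\<close>

text \<open>Client i's contribution to E\<parallel>G\<parallel>^2, in terms of its components U of \<nabla>\<phi>, V of \<nabla>\<psi>_j
  and g of \<nabla>f_i, where t = \<tau>_j and a = \<alpha>_j.\<close>
definition client_moment :: "real \<Rightarrow> real \<Rightarrow> real \<Rightarrow> real \<Rightarrow> 'd::real_inner \<Rightarrow> 'd \<Rightarrow> 'd \<Rightarrow> real" where
  "client_moment p0 pj t a U V g =
     p0 * (norm ((1 / p0) *\<^sub>R (U + (t * (1 - a)) *\<^sub>R V)))\<^sup>2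
     + (1 - p0) * (pj * (norm (((1 - t) * (1 - a) / ((1 - p0) * pj)) *\<^sub>R V))\<^sup>2
                 + (1 - pj) * (norm ((1 / ((1 - p0) * (1 - pj))) *\<^sub>R g))\<^sup>2)"

definition client_bound :: "real \<Rightarrow> real \<Rightarrow> real \<Rightarrow> 'd::real_inner \<Rightarrow> 'd \<Rightarrow> 'd \<Rightarrow> real" where
  "client_bound p0 pj a U V g =
     2 / p0 * (norm U)\<^sup>2 + 2 * (1 - a)\<^sup>2 / (p0 + 2 * (1 - p0) * pj) * (norm V)\<^sup>2
     + 1 / ((1 - p0) * (1 - pj)) * (norm g)\<^sup>2"

lemma client_moment_le_split:
  assumes "0 \<le> p0" "p0 \<le> 1" "0 \<le> pj" "pj \<le> 1"
  shows "client_moment p0 pj t a U V g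
    \<le> 2 * client_moment p0 pj t a (U - U') (V - V') (g - g') + 2 * client_moment p0 pj t a U' V' g'"
proof -
  have split: "(norm a)\<^sup>2 \<le> 2 * (norm (a - b))\<^sup>2 + 2 * (norm b)\<^sup>2" for a b :: 'a
    using power2_norm_add_le[of "a - b" b] by simp
  let ?s1 = "1 / p0" and ?c = "t * (1 - a)" and ?s2 = "(1 - t) * (1 - a) / ((1 - p0) * pj)"
    and ?s3 = "1 / ((1 - p0) * (1 - pj))"
  have 1: "p0 * (norm (?s1 *\<^sub>R (U + ?c *\<^sub>R V)))\<^sup>2
      \<le> p0 * (2 * (norm (?s1 *\<^sub>R ((U - U') + ?c *\<^sub>R (V - V'))))\<^sup>2 + 2 * (norm (?s1 *\<^sub>R (U' + ?c *\<^sub>R V')))\<^sup>2)"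
    using assms split[of "?s1 *\<^sub>R (U + ?c *\<^sub>R V)" "?s1 *\<^sub>R (U' + ?c *\<^sub>R V')"]
    by (intro mult_left_mono) (auto simp: algebra_simps)
  have 2: "pj * (norm (?s2 *\<^sub>R V))\<^sup>2 \<le> pj * (2 * (norm (?s2 *\<^sub>R (V - V')))\<^sup>2 + 2 * (norm (?s2 *\<^sub>R V'))\<^sup>2)"
    using assms split[of "?s2 *\<^sub>R V" "?s2 *\<^sub>R V'"]
    by (intro mult_left_mono) (auto simp: algebra_simps)
  have 3: "(1 - pj) * (norm (?s3 *\<^sub>R g))\<^sup>2
      \<le> (1 - pj) * (2 * (norm (?s3 *\<^sub>R (g - g')))\<^sup>2 + 2 * (norm (?s3 *\<^sub>R g'))\<^sup>2)"
    using assms split[of "?s3 *\<^sub>R g" "?s3 *\<^sub>R g'"]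
    by (intro mult_left_mono) (auto simp: algebra_simps)
  have "(1 - p0) * (pj * (norm (?s2 *\<^sub>R V))\<^sup>2 + (1 - pj) * (norm (?s3 *\<^sub>R g))\<^sup>2)
     \<le> (1 - p0) * (pj * (2 * (norm (?s2 *\<^sub>R (V - V')))\<^sup>2 + 2 * (norm (?s2 *\<^sub>R V'))\<^sup>2)
        + (1 - pj) * (2 * (norm (?s3 *\<^sub>R (g - g')))\<^sup>2 + 2 * (norm (?s3 *\<^sub>R g'))\<^sup>2))"
    using 2 3 assms by (intro mult_left_mono) auto
  with 1 show ?thesis unfolding client_moment_def by (simp add: algebra_simps)
qed

text \<open>This is what the choice of \<tau>_j is made for: after Young's inequality on the first term
  of the moment, the two coefficients of \<parallel>V\<parallel>^2 add up to the one in \<sigma>^2.\<close>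
lemma tau_coefficient_identity:
  fixes p0 pj :: real
  assumes "0 < p0" "p0 < 1" "0 < pj" "pj < 1" "t = p0 / (p0 + 2 * (1 - p0) * pj)"
  shows "2 * t\<^sup>2 / p0 + (1 - t)\<^sup>2 / ((1 - p0) * pj) = 2 / (p0 + 2 * (1 - p0) * pj)"
proof -
  define D where "D = p0 + 2 * (1 - p0) * pj"
  have D: "0 < D" unfolding D_def using assms by (simp add: add_pos_nonneg)
  have "t = p0 / D" and "1 - t = 2 * (1 - p0) * pj / D"
    using D assms(5) unfolding D_def by (simp_all add: field_simps)
  then have "2 * t\<^sup>2 / p0 + (1 - t)\<^sup>2 / ((1 - p0) * pj)
      = 2 * (p0 / D)\<^sup>2 / p0 + (2 * (1 - p0) * pj / D)\<^sup>2 / ((1 - p0) * pj)"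
    by simp
  also have "\<dots> = 2 * (p0 + 2 * (1 - p0) * pj) / D\<^sup>2"
    using assms D by (simp add: field_simps power2_eq_square)
  also have "\<dots> = 2 / D"
    unfolding D_def[symmetric] using D by (simp add: power2_eq_square)
  finally show ?thesis unfolding D_def .
qed

lemma client_moment_le_client_bound:
  assumes p0: "0 < p0" "p0 < 1" and pj: "0 < pj" "pj < 1" and t: "t = p0 / (p0 + 2 * (1 - p0) * pj)"
  shows "client_moment p0 pj t a U V g \<le> client_bound p0 pj a U V g"
proof -
  have q1: "0 < (1 - p0) * pj" and q2: "0 < (1 - p0) * (1 - pj)" using p0 pj by auto
  have "p0 * (norm ((1 / p0) *\<^sub>R (U + (t * (1 - a)) *\<^sub>R V)))\<^sup>2 = (1 / p0) * (norm (U + (t * (1 - a)) *\<^sub>R V))\<^sup>2"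
    using p0 by (simp add: power2_eq_square)
  moreover have "(1 - p0) * (pj * (norm (((1 - t) * (1 - a) / ((1 - p0) * pj)) *\<^sub>R V))\<^sup>2)
      = (1 - t)\<^sup>2 * (1 - a)\<^sup>2 / ((1 - p0) * pj) * (norm V)\<^sup>2"
    using q1 unfolding power2_norm_scaleR by (simp add: power2_eq_square)
  moreover have "(1 - p0) * ((1 - pj) * (norm ((1 / ((1 - p0) * (1 - pj))) *\<^sub>R g))\<^sup>2)
      = 1 / ((1 - p0) * (1 - pj)) * (norm g)\<^sup>2"
    using q2 unfolding power2_norm_scaleR by (simp add: power2_eq_square)
  ultimately have "client_moment p0 pj t a U V g = (1 / p0) * (norm (U + (t * (1 - a)) *\<^sub>R V))\<^sup>2
      + (1 - t)\<^sup>2 * (1 - a)\<^sup>2 / ((1 - p0) * pj) * (norm V)\<^sup>2 + 1 / ((1 - p0) * (1 - pj)) * (norm g)\<^sup>2"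
    unfolding client_moment_def by (simp add: distrib_left)
  also have "\<dots> \<le> (1 / p0) * (2 * (norm U)\<^sup>2 + 2 * (t * (1 - a))\<^sup>2 * (norm V)\<^sup>2)
      + (1 - t)\<^sup>2 * (1 - a)\<^sup>2 / ((1 - p0) * pj) * (norm V)\<^sup>2 + 1 / ((1 - p0) * (1 - pj)) * (norm g)\<^sup>2"
    using power2_norm_add_le[of U "(t * (1 - a)) *\<^sub>R V", unfolded power2_norm_scaleR] p0
    by (simp add: mult.assoc divide_right_mono)
  also have "\<dots> = 2 / p0 * (norm U)\<^sup>2
      + (1 - a)\<^sup>2 * (norm V)\<^sup>2 * (2 * t\<^sup>2 / p0 + (1 - t)\<^sup>2 / ((1 - p0) * pj))
      + 1 / ((1 - p0) * (1 - pj)) * (norm g)\<^sup>2"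
    by (simp add: power_mult_distrib distrib_left add_divide_distrib mult_ac)
  also have "\<dots> = client_bound p0 pj a U V g"
    unfolding tau_coefficient_identity[OF p0 pj t] client_bound_def by simp
  finally show ?thesis .
qed

lemma sum_over_clusters:
  fixes cl :: "'n::finite \<Rightarrow> 'k::finite" and g :: "'k \<Rightarrow> 'n \<Rightarrow> 'a::comm_monoid_add"
  shows "(\<Sum>j\<in>UNIV. \<Sum>i\<in>{i. cl i = j}. g j i) = (\<Sum>i\<in>UNIV. g (cl i) i)"
proof -
  have "(\<Sum>j\<in>UNIV. \<Sum>i\<in>{i. cl i = j}. g j i) = (\<Sum>j\<in>UNIV. \<Sum>i\<in>{i. i \<in> UNIV \<and> cl i = j}. g (cl i) i)"
    by (intro sum.cong refl) auto
  also have "\<dots> = (\<Sum>i\<in>UNIV. g (cl i) i)"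
    by (rule sum.group) auto
  finally show ?thesis .
qed

lemma sum_cluster_eq_sum_if:
  fixes cl :: "'n::finite \<Rightarrow> 'k" and g :: "'n \<Rightarrow> 'a::comm_monoid_add"
  shows "(\<Sum>i\<in>{i. cl i = j}. g i) = (\<Sum>i\<in>UNIV. if cl i = j then g i else 0)"
  using sum.inter_filter[of UNIV g "\<lambda>i. cl i = j"] by simp

definition global_weight :: "('k \<Rightarrow> real) \<Rightarrow> ('n \<Rightarrow> real) \<Rightarrow> ('n \<Rightarrow> 'k) \<Rightarrow> 'n \<Rightarrow> real" where
  "global_weight \<alpha> \<gamma> cl i = \<alpha> (cl i) * \<gamma> i"

definition cluster_weight :: "('n \<Rightarrow> real) \<Rightarrow> ('n \<Rightarrow> 'k) \<Rightarrow> 'k \<Rightarrow> 'n \<Rightarrow> real" where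
  "cluster_weight \<gamma> cl j i = (if cl i = j then \<gamma> i else 0)"

lemma sum_cluster_weight:
  fixes cl :: "'n::finite \<Rightarrow> 'k"
  assumes "\<And>i. F 0 i = (0::'a::comm_monoid_add)"
  shows "(\<Sum>i\<in>UNIV. F (cluster_weight \<gamma> cl j i) i) = (\<Sum>i\<in>{i. cl i = j}. F (\<gamma> i) i)"
  unfolding sum_cluster_eq_sum_if[where cl=cl and j=j] using assms
  by (intro sum.cong) (auto simp: cluster_weight_def)

lemma global_mean_eq_wmean: "global_mean \<alpha> \<gamma> cl \<Theta> = wmean (global_weight \<alpha> \<gamma> cl) \<Theta>"
  unfolding global_mean_def wmean_def global_weight_def
  by (simp only: sum_over_clusters[where cl=cl and g="\<lambda>j i. (\<alpha> j * \<gamma> i) *\<^sub>R \<Theta> $ i"]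
      sum_over_clusters[where cl=cl and g="\<lambda>j i. \<alpha> j * \<gamma> i"])

lemma cluster_mean_eq_wmean: "cluster_mean \<gamma> cl \<Theta> j = wmean (cluster_weight \<gamma> cl j) \<Theta>"
  unfolding cluster_mean_def wmean_def
  using sum_cluster_weight[where F="\<lambda>a i. a *\<^sub>R \<Theta> $ i" and \<gamma>=\<gamma> and cl=cl and j=j]
    sum_cluster_weight[where F="\<lambda>a i. a" and \<gamma>=\<gamma> and cl=cl and j=j]
  by simp

lemma phi_eq_wvar: "phi \<alpha> \<gamma> cl = wvar (global_weight \<alpha> \<gamma> cl)"
proof
  fix \<Theta>
  have "(\<Sum>j\<in>UNIV. \<alpha> j * (\<Sum>i\<in>{i. cl i = j}. \<gamma> i * (norm (\<Theta> $ i - global_mean \<alpha> \<gamma> cl \<Theta>))\<^sup>2))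
     = (\<Sum>j\<in>UNIV. \<Sum>i\<in>{i. cl i = j}. \<alpha> j * \<gamma> i * (norm (\<Theta> $ i - global_mean \<alpha> \<gamma> cl \<Theta>))\<^sup>2)"
    by (simp add: sum_distrib_left mult.assoc)
  also have "\<dots> = (\<Sum>i\<in>UNIV. global_weight \<alpha> \<gamma> cl i * (norm (\<Theta> $ i - wmean (global_weight \<alpha> \<gamma> cl) \<Theta>))\<^sup>2)"
    by (simp only: sum_over_clusters global_mean_eq_wmean global_weight_def)
  finally show "phi \<alpha> \<gamma> cl \<Theta> = wvar (global_weight \<alpha> \<gamma> cl) \<Theta>"
    unfolding phi_def wvar_def by simp
qed

lemma psi_eq_wvar: "psi \<gamma> cl j = wvar (cluster_weight \<gamma> cl j)"
proof
  fix \<Theta>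
  show "psi \<gamma> cl j \<Theta> = wvar (cluster_weight \<gamma> cl j) \<Theta>"
    unfolding psi_def wvar_def cluster_mean_eq_wmean
    using sum_cluster_weight[where F="\<lambda>a i. a * (norm (\<Theta> $ i - wmean (cluster_weight \<gamma> cl j) \<Theta>))\<^sup>2"
        and \<gamma>=\<gamma> and cl=cl and j=j]
    by simp
qed

lemma sum_cluster_weight_pos:
  fixes cl :: "'n::finite \<Rightarrow> 'k"
  assumes "surj cl" "\<And>i. 0 < \<gamma> i"
  shows "0 < (\<Sum>i\<in>UNIV. cluster_weight \<gamma> cl j i)"
proof -
  obtain i0 where "cl i0 = j" using assms(1) by (metis surjD)
  then show ?thesis
    using assms by (intro sum_pos2[of UNIV i0]) (auto simp: cluster_weight_def less_imp_le)
qed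

lemma sum_global_weight_pos:
  fixes cl :: "'n::finite \<Rightarrow> 'k"
  assumes "surj cl" "\<And>i. 0 < \<gamma> i" "\<And>j. 0 \<le> \<alpha> j" "\<alpha> j0 \<noteq> 0"
  shows "0 < (\<Sum>i\<in>UNIV. global_weight \<alpha> \<gamma> cl i)"
proof -
  obtain i0 where "cl i0 = j0" using assms(1) by (metis surjD)
  moreover have "0 < \<alpha> j0" using assms(3)[of j0] assms(4) by simp
  ultimately show ?thesis
    using assms by (intro sum_pos2[of UNIV i0]) (auto simp: global_weight_def less_imp_le)
qed

lemma sum_cluster_dispersions:
  fixes cl :: "'n::finite \<Rightarrow> 'k::finite" and e :: "'d::euclidean_space^'n"
  shows "(\<Sum>i\<in>UNIV. (1 - \<alpha> (cl i)) * \<gamma> i * (norm (e $ i - wmean (cluster_weight \<gamma> cl (cl i)) e))\<^sup>2)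
   = 2 * (\<Sum>j\<in>UNIV. (1 - \<alpha> j) * wvar (cluster_weight \<gamma> cl j) e)"
proof -
  have "(\<Sum>j\<in>UNIV. (1 - \<alpha> j) * wvar (cluster_weight \<gamma> cl j) e)
      = 1/2 * (\<Sum>j\<in>UNIV. \<Sum>i\<in>{i. cl i = j}.
          (1 - \<alpha> j) * \<gamma> i * (norm (e $ i - wmean (cluster_weight \<gamma> cl j) e))\<^sup>2)"
    unfolding psi_eq_wvar[symmetric] psi_def cluster_mean_eq_wmean
    by (simp add: sum_distrib_left mult.assoc mult.left_commute)
  also have "\<dots> = 1/2 * (\<Sum>i\<in>UNIV. (1 - \<alpha> (cl i)) * \<gamma> i * (norm (e $ i - wmean (cluster_weight \<gamma> cl (cl i)) e))\<^sup>2)"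
    by (simp only: sum_over_clusters[where cl=cl and
          g="\<lambda>j i. (1 - \<alpha> j) * \<gamma> i * (norm (e $ i - wmean (cluster_weight \<gamma> cl j) e))\<^sup>2"])
  finally show ?thesis by simp
qed

lemma Gorc_component_depends_on_own_cluster:
  "Gorc f \<alpha> \<gamma> cl p0 p \<tau> xi0 xi \<Theta> $ i = Gorc f \<alpha> \<gamma> cl p0 p \<tau> xi0 (\<lambda>_. xi (cl i)) \<Theta> $ i"
  unfolding Gorc_def by (simp add: Let_def)

lemma Gorc_global_step:
  "Gorc f \<alpha> \<gamma> cl p0 p \<tau> True xi \<Theta> $ i = (1 / p0) *\<^sub>R
     (wvar_grad (global_weight \<alpha> \<gamma> cl) \<Theta> $ i
      + (\<tau> (cl i) * (1 - \<alpha> (cl i))) *\<^sub>R wvar_grad (cluster_weight \<gamma> cl (cl i)) \<Theta> $ i)"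
  unfolding Gorc_def wvar_grad_def cluster_weight_def global_weight_def
    global_mean_eq_wmean cluster_mean_eq_wmean
  by (simp add: Let_def scaleR_add_right scaleR_scaleR mult.commute mult.left_commute)

lemma Gorc_cluster_step:
  "Gorc f \<alpha> \<gamma> cl p0 p \<tau> False (\<lambda>_. True) \<Theta> $ i =
     ((1 - \<tau> (cl i)) * (1 - \<alpha> (cl i)) / ((1 - p0) * p (cl i))) *\<^sub>R
       wvar_grad (cluster_weight \<gamma> cl (cl i)) \<Theta> $ i"
  unfolding Gorc_def wvar_grad_def cluster_weight_def cluster_mean_eq_wmean
  by (simp add: Let_def scaleR_scaleR)

lemma Gorc_local_step:
  "Gorc f \<alpha> \<gamma> cl p0 p \<tau> False (\<lambda>_. False) \<Theta> $ i =
     (1 / ((1 - p0) * (1 - p (cl i)))) *\<^sub>R grad (f i) (\<Theta> $ i)"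
  unfolding Gorc_def by (simp add: Let_def)

lemma EGsq_eq_sum_over_clients:
  fixes f :: "'n::finite \<Rightarrow> 'd::euclidean_space \<Rightarrow> real" and cl :: "'n \<Rightarrow> 'k::finite"
  shows "EGsq f \<alpha> \<gamma> cl p0 p \<tau> \<Theta> = (\<Sum>i\<in>UNIV.
     p0 * (norm (Gorc f \<alpha> \<gamma> cl p0 p \<tau> True (\<lambda>_. True) \<Theta> $ i))\<^sup>2
   + (1 - p0) * (p (cl i) * (norm (Gorc f \<alpha> \<gamma> cl p0 p \<tau> False (\<lambda>_. True) \<Theta> $ i))\<^sup>2
               + (1 - p (cl i)) * (norm (Gorc f \<alpha> \<gamma> cl p0 p \<tau> False (\<lambda>_. False) \<Theta> $ i))\<^sup>2))"
proof -
  let ?G = "\<lambda>xi0 xi. Gorc f \<alpha> \<gamma> cl p0 p \<tau> xi0 xi \<Theta>"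
  let ?q = "\<lambda>j b. if b then p j else 1 - p j"
  have "EGsq f \<alpha> \<gamma> cl p0 p \<tau> \<Theta> = (\<Sum>xi0\<in>(UNIV::bool set). \<Sum>xi\<in>(UNIV::('k \<Rightarrow> bool) set).
        \<Sum>i\<in>UNIV. (if xi0 then p0 else 1 - p0) *
          ((\<Prod>j\<in>UNIV. ?q j (xi j)) * (norm (?G xi0 (\<lambda>_. xi (cl i)) $ i))\<^sup>2))"
    unfolding EGsq_def power2_norm_vec
    by (intro sum.cong refl)
      (simp add: sum_distrib_left Gorc_component_depends_on_own_cluster[symmetric] mult.assoc)
  also have "\<dots> = (\<Sum>i\<in>UNIV. \<Sum>xi0\<in>(UNIV::bool set). (if xi0 then p0 else 1 - p0) *
        (\<Sum>xi\<in>(UNIV::('k \<Rightarrow> bool) set). (\<Prod>j\<in>UNIV. ?q j (xi j))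
           * (\<lambda>b. (norm (?G xi0 (\<lambda>_. b) $ i))\<^sup>2) (xi (cl i))))"
    by (simp only: sum_distrib_left, subst sum.swap, rule sum.swap)
  also have "\<dots> = (\<Sum>i\<in>UNIV. \<Sum>xi0\<in>(UNIV::bool set). (if xi0 then p0 else 1 - p0) *
        (p (cl i) * (norm (?G xi0 (\<lambda>_. True) $ i))\<^sup>2
         + (1 - p (cl i)) * (norm (?G xi0 (\<lambda>_. False) $ i))\<^sup>2))"
    by (subst sum_product_weights_one_coordinate) auto
  also have "\<dots> = (\<Sum>i\<in>UNIV.
     p0 * (norm (?G True (\<lambda>_. True) $ i))\<^sup>2
   + (1 - p0) * (p (cl i) * (norm (?G False (\<lambda>_. True) $ i))\<^sup>2
               + (1 - p (cl i)) * (norm (?G False (\<lambda>_. False) $ i))\<^sup>2))"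
    by (intro sum.cong refl) (simp add: UNIV_bool Gorc_def Let_def algebra_simps)
  finally show ?thesis .
qed

lemma EGsq_eq_sum_client_moment:
  fixes f :: "'n::finite \<Rightarrow> 'd::euclidean_space \<Rightarrow> real" and cl :: "'n \<Rightarrow> 'k::finite"
  shows "EGsq f \<alpha> \<gamma> cl p0 p \<tau> \<Theta> = (\<Sum>i\<in>UNIV. client_moment p0 (p (cl i)) (\<tau> (cl i)) (\<alpha> (cl i))
     (wvar_grad (global_weight \<alpha> \<gamma> cl) \<Theta> $ i) (wvar_grad (cluster_weight \<gamma> cl (cl i)) \<Theta> $ i)
     (grad (f i) (\<Theta> $ i)))"
  unfolding EGsq_eq_sum_over_clients client_moment_def
  by (simp only: Gorc_global_step Gorc_cluster_step Gorc_local_step)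

lemma has_derivative_component:
  fixes g :: "'d::euclidean_space \<Rightarrow> real" and \<Theta> :: "'d^'n::finite"
  assumes "\<And>x. g differentiable (at x)"
  shows "((\<lambda>\<Theta>. g (\<Theta> $ i)) has_derivative (\<lambda>h. grad g (\<Theta> $ i) \<bullet> h $ i)) (at \<Theta>)"
  using bounded_linear_imp_has_derivative[OF bounded_linear_vec_nth] has_derivative_grad[OF assms]
  by (rule has_derivative_compose)

lemma grad_Fc:
  fixes f :: "'n::finite \<Rightarrow> 'd::euclidean_space \<Rightarrow> real"
  assumes "\<And>i x. f i differentiable (at x)"
  shows "grad (Fc f cl j) \<Theta> = (\<chi> i. if cl i = j then grad (f i) (\<Theta> $ i) else 0)"
proof (rule grad_eqI)
  have "(Fc f cl j has_derivative (\<lambda>h. \<Sum>i\<in>{i. cl i = j}. grad (f i) (\<Theta> $ i) \<bullet> h $ i)) (at \<Theta>)"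
    unfolding Fc_def by (intro has_derivative_sum has_derivative_component assms)
  moreover have "(\<Sum>i\<in>{i. cl i = j}. grad (f i) (\<Theta> $ i) \<bullet> h $ i)
      = (\<chi> i. if cl i = j then grad (f i) (\<Theta> $ i) else 0) \<bullet> h" for h
    by (simp add: inner_vec_def sum_cluster_eq_sum_if[where cl=cl and j=j] if_distrib[where f="\<lambda>v. v \<bullet> _"]
        cong: if_cong)
  ultimately show "(Fc f cl j has_derivative (\<lambda>h. (\<chi> i. if cl i = j then grad (f i) (\<Theta> $ i) else 0) \<bullet> h)) (at \<Theta>)"
    by simp
qed

lemma Fobj_eq_wvar:
  fixes f :: "'n::finite \<Rightarrow> 'd::euclidean_space \<Rightarrow> real" and cl :: "'n \<Rightarrow> 'k::finite"
  shows "Fobj f \<alpha> \<gamma> cl = (\<lambda>\<Theta>. (\<Sum>i\<in>UNIV. f i (\<Theta> $ i))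
     + (\<Sum>j\<in>UNIV. (1 - \<alpha> j) * wvar (cluster_weight \<gamma> cl j) \<Theta>) + wvar (global_weight \<alpha> \<gamma> cl) \<Theta>)"
  unfolding Fobj_def Fc_def psi_eq_wvar phi_eq_wvar
  by (simp only: sum_over_clusters[where g="\<lambda>j i. f i (_ $ i)"])

lemma has_derivative_Fobj:
  fixes f :: "'n::finite \<Rightarrow> 'd::euclidean_space \<Rightarrow> real" and cl :: "'n \<Rightarrow> 'k::finite"
  assumes "\<And>i x. f i differentiable (at x)"
    and "\<And>j. (\<Sum>i\<in>UNIV. cluster_weight \<gamma> cl j i) \<noteq> 0" and "(\<Sum>i\<in>UNIV. global_weight \<alpha> \<gamma> cl i) \<noteq> 0"
  shows "(Fobj f \<alpha> \<gamma> cl has_derivative (\<lambda>h. (\<Sum>i\<in>UNIV. grad (f i) (\<Theta> $ i) \<bullet> h $ i)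
     + (\<Sum>j\<in>UNIV. (1 - \<alpha> j) * (wvar_grad (cluster_weight \<gamma> cl j) \<Theta> \<bullet> h))
     + wvar_grad (global_weight \<alpha> \<gamma> cl) \<Theta> \<bullet> h)) (at \<Theta>)"
  unfolding Fobj_eq_wvar
  by (intro has_derivative_add has_derivative_sum has_derivative_mult_right
      has_derivative_component has_derivative_wvar assms)

text \<open>At the minimizer the linear terms of the expansion vanish, leaving the exact quadratic
  remainders of \<phi> and \<psi>_j and the Bregman divergences of the f_i.\<close>
lemma Fobj_gap_eq:
  fixes f :: "'n::finite \<Rightarrow> 'd::euclidean_space \<Rightarrow> real" and cl :: "'n \<Rightarrow> 'k::finite"
  assumes "\<And>i x. f i differentiable (at x)"
    and wc: "\<And>j. (\<Sum>i\<in>UNIV. cluster_weight \<gamma> cl j i) \<noteq> 0"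
    and wg: "(\<Sum>i\<in>UNIV. global_weight \<alpha> \<gamma> cl i) \<noteq> 0"
    and min: "\<forall>\<Theta>'. Fobj f \<alpha> \<gamma> cl \<Theta>h \<le> Fobj f \<alpha> \<gamma> cl \<Theta>'"
  shows "Fobj f \<alpha> \<gamma> cl \<Theta> - Fobj f \<alpha> \<gamma> cl \<Theta>h = wvar (global_weight \<alpha> \<gamma> cl) (\<Theta> - \<Theta>h)
     + (\<Sum>j\<in>UNIV. (1 - \<alpha> j) * wvar (cluster_weight \<gamma> cl j) (\<Theta> - \<Theta>h))
     + (\<Sum>i\<in>UNIV. bregman (f i) (\<Theta> $ i) (\<Theta>h $ i))"
proof -
  define D where "D h = (\<Sum>i\<in>UNIV. grad (f i) (\<Theta>h $ i) \<bullet> h $ i)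
     + (\<Sum>j\<in>UNIV. (1 - \<alpha> j) * (wvar_grad (cluster_weight \<gamma> cl j) \<Theta>h \<bullet> h))
     + wvar_grad (global_weight \<alpha> \<gamma> cl) \<Theta>h \<bullet> h" for h
  have "(Fobj f \<alpha> \<gamma> cl has_derivative D) (at \<Theta>h)"
    unfolding D_def using assms(1) wc wg by (rule has_derivative_Fobj)
  then have "D = (\<lambda>h. 0)"
    using min by (intro differential_zero_maxmin[of \<Theta>h UNIV]) auto
  then have "Fobj f \<alpha> \<gamma> cl \<Theta> - Fobj f \<alpha> \<gamma> cl \<Theta>h = Fobj f \<alpha> \<gamma> cl \<Theta> - Fobj f \<alpha> \<gamma> cl \<Theta>h - D (\<Theta> - \<Theta>h)"
    by simp
  also have "\<dots> = (\<Sum>i\<in>UNIV. bregman (f i) (\<Theta> $ i) (\<Theta>h $ i))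
     + (\<Sum>j\<in>UNIV. (1 - \<alpha> j) * (wvar (cluster_weight \<gamma> cl j) \<Theta> - wvar (cluster_weight \<gamma> cl j) \<Theta>h
          - wvar_grad (cluster_weight \<gamma> cl j) \<Theta>h \<bullet> (\<Theta> - \<Theta>h)))
     + (wvar (global_weight \<alpha> \<gamma> cl) \<Theta> - wvar (global_weight \<alpha> \<gamma> cl) \<Theta>h
          - wvar_grad (global_weight \<alpha> \<gamma> cl) \<Theta>h \<bullet> (\<Theta> - \<Theta>h))"
    unfolding Fobj_eq_wvar D_def bregman_def
    by (simp add: sum_subtractf sum.distrib right_diff_distrib)
  finally show ?thesis
    by (simp add: wvar_taylor[OF wg] wvar_taylor[OF wc])
qed

subsection \<open>Bounding the second moment\<close>

definition stacked_grad :: "('n::finite \<Rightarrow> 'd::euclidean_space \<Rightarrow> real) \<Rightarrow> 'd^'n \<Rightarrow> 'd^'n" where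
  "stacked_grad f \<Theta> = (\<chi> i. grad (f i) (\<Theta> $ i))"

definition moment_bound :: "('k \<Rightarrow> real) \<Rightarrow> ('n::finite \<Rightarrow> real) \<Rightarrow> ('n \<Rightarrow> 'k)
    \<Rightarrow> real \<Rightarrow> ('k \<Rightarrow> real) \<Rightarrow> 'd::euclidean_space^'n \<Rightarrow> 'd^'n \<Rightarrow> real" where
  "moment_bound \<alpha> \<gamma> cl p0 p \<Theta> G = (\<Sum>i\<in>UNIV. client_bound p0 (p (cl i)) (\<alpha> (cl i))
     (wvar_grad (global_weight \<alpha> \<gamma> cl) \<Theta> $ i) (wvar_grad (cluster_weight \<gamma> cl (cl i)) \<Theta> $ i) (G $ i))"

lemma EGsq_le_moment_bounds:
  fixes f :: "'n::finite \<Rightarrow> 'd::euclidean_space \<Rightarrow> real" and cl :: "'n \<Rightarrow> 'k::finite"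
  assumes p0: "0 < p0" "p0 < 1" and p: "\<And>j. 0 < p j \<and> p j < 1"
    and \<tau>: "\<And>j. \<tau> j = p0 / (p0 + 2 * (1 - p0) * p j)"
  shows "EGsq f \<alpha> \<gamma> cl p0 p \<tau> \<Theta>
    \<le> 2 * moment_bound \<alpha> \<gamma> cl p0 p (\<Theta> - \<Theta>h) (stacked_grad f \<Theta> - stacked_grad f \<Theta>h)
      + 2 * moment_bound \<alpha> \<gamma> cl p0 p \<Theta>h (stacked_grad f \<Theta>h)"
proof -
  let ?U = "\<lambda>X i. wvar_grad (global_weight \<alpha> \<gamma> cl) X $ i"
  let ?V = "\<lambda>X i. wvar_grad (cluster_weight \<gamma> cl (cl i)) X $ i"
  let ?g = "\<lambda>X i. grad (f i) (X $ i)"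
  let ?M = "\<lambda>i. client_moment p0 (p (cl i)) (\<tau> (cl i)) (\<alpha> (cl i))"
  let ?B = "\<lambda>i. client_bound p0 (p (cl i)) (\<alpha> (cl i))"
  have "EGsq f \<alpha> \<gamma> cl p0 p \<tau> \<Theta> = (\<Sum>i\<in>UNIV. ?M i (?U \<Theta> i) (?V \<Theta> i) (?g \<Theta> i))"
    by (rule EGsq_eq_sum_client_moment)
  also have "\<dots> \<le> (\<Sum>i\<in>UNIV. 2 * ?M i (?U \<Theta> i - ?U \<Theta>h i) (?V \<Theta> i - ?V \<Theta>h i) (?g \<Theta> i - ?g \<Theta>h i)
      + 2 * ?M i (?U \<Theta>h i) (?V \<Theta>h i) (?g \<Theta>h i))"
    using p0 p by (intro sum_mono client_moment_le_split) (auto simp: less_imp_le)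
  also have "\<dots> \<le> (\<Sum>i\<in>UNIV. 2 * ?B i (?U \<Theta> i - ?U \<Theta>h i) (?V \<Theta> i - ?V \<Theta>h i) (?g \<Theta> i - ?g \<Theta>h i)
      + 2 * ?B i (?U \<Theta>h i) (?V \<Theta>h i) (?g \<Theta>h i))"
    using p0 p \<tau> by (intro sum_mono add_mono mult_left_mono client_moment_le_client_bound) auto
  also have "\<dots> = 2 * moment_bound \<alpha> \<gamma> cl p0 p (\<Theta> - \<Theta>h) (stacked_grad f \<Theta> - stacked_grad f \<Theta>h)
      + 2 * moment_bound \<alpha> \<gamma> cl p0 p \<Theta>h (stacked_grad f \<Theta>h)"
    unfolding moment_bound_def stacked_grad_def wvar_grad_diff
    by (simp add: sum.distrib sum_distrib_left)
  finally show ?thesis .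
qed

lemma sigma2_eq_moment_bound:
  fixes f :: "'n::finite \<Rightarrow> 'd::euclidean_space \<Rightarrow> real" and cl :: "'n \<Rightarrow> 'k::finite"
  assumes "\<And>i x. f i differentiable (at x)"
    and wc: "\<And>j. (\<Sum>i\<in>UNIV. cluster_weight \<gamma> cl j i) \<noteq> 0"
    and wg: "(\<Sum>i\<in>UNIV. global_weight \<alpha> \<gamma> cl i) \<noteq> 0"
  shows "sigma2 f \<alpha> \<gamma> cl p0 p \<Theta>h = moment_bound \<alpha> \<gamma> cl p0 p \<Theta>h (stacked_grad f \<Theta>h)"
proof -
  have "grad (phi \<alpha> \<gamma> cl) \<Theta>h = wvar_grad (global_weight \<alpha> \<gamma> cl) \<Theta>h"
    unfolding phi_eq_wvar by (rule grad_eqI[OF has_derivative_wvar[OF wg]])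
  then have \<phi>: "(norm (grad (phi \<alpha> \<gamma> cl) \<Theta>h))\<^sup>2
      = (\<Sum>i\<in>UNIV. (norm (wvar_grad (global_weight \<alpha> \<gamma> cl) \<Theta>h $ i))\<^sup>2)"
    by (simp add: power2_norm_vec)
  have "(norm (grad (psi \<gamma> cl j) \<Theta>h))\<^sup>2
      = (\<Sum>i\<in>{i. cl i = j}. (norm (wvar_grad (cluster_weight \<gamma> cl j) \<Theta>h $ i))\<^sup>2)" for j
    unfolding psi_eq_wvar grad_eqI[OF has_derivative_wvar[OF wc]] power2_norm_vec
      sum_cluster_eq_sum_if[where cl=cl and j=j]
    by (intro sum.cong) (auto simp: wvar_grad_def cluster_weight_def)
  then have \<psi>: "(\<Sum>j\<in>UNIV. 2 * (1 - \<alpha> j)\<^sup>2 / (p0 + 2 * (1 - p0) * p j) * (norm (grad (psi \<gamma> cl j) \<Theta>h))\<^sup>2)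
      = (\<Sum>i\<in>UNIV. 2 * (1 - \<alpha> (cl i))\<^sup>2 / (p0 + 2 * (1 - p0) * p (cl i))
          * (norm (wvar_grad (cluster_weight \<gamma> cl (cl i)) \<Theta>h $ i))\<^sup>2)"
    by (simp add: sum_distrib_left sum_over_clusters)
  have "(norm (grad (Fc f cl j) \<Theta>h))\<^sup>2 = (\<Sum>i\<in>{i. cl i = j}. (norm (grad (f i) (\<Theta>h $ i)))\<^sup>2)" for j
    unfolding grad_Fc[OF assms(1)] power2_norm_vec sum_cluster_eq_sum_if[where cl=cl and j=j]
    by (intro sum.cong) auto
  then have F: "1 / (1 - p0) * (\<Sum>j\<in>UNIV. 1 / (1 - p j) * (norm (grad (Fc f cl j) \<Theta>h))\<^sup>2)
      = (\<Sum>i\<in>UNIV. 1 / ((1 - p0) * (1 - p (cl i))) * (norm (grad (f i) (\<Theta>h $ i)))\<^sup>2)"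
    by (simp add: sum_distrib_left sum_over_clusters)
  show ?thesis
    unfolding sigma2_def \<phi> \<psi> F moment_bound_def client_bound_def stacked_grad_def
    by (simp add: sum.distrib sum_distrib_left)
qed

lemma LLcal_ge_global:
  fixes cl :: "'n::finite \<Rightarrow> 'k::finite"
  assumes "0 < p0"
  shows "2 / p0 * global_weight \<alpha> \<gamma> cl i \<le> LLcal L \<alpha> \<gamma> cl p0 p"
proof -
  have "\<alpha> (cl i) * \<gamma> i \<le> Max ((\<lambda>i'. \<alpha> (cl i) * \<gamma> i') ` {i'. cl i' = cl i})"
    by (rule Max_ge) auto
  also have "\<dots> \<le> Max ((\<lambda>j. Max ((\<lambda>i. \<alpha> j * \<gamma> i) ` {i. cl i = j})) ` UNIV)"
    by (rule Max_ge) auto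
  finally have "2 / p0 * (\<alpha> (cl i) * \<gamma> i) \<le> 2 / p0 * Max ((\<lambda>j. Max ((\<lambda>i. \<alpha> j * \<gamma> i) ` {i. cl i = j})) ` UNIV)"
    using assms by (intro mult_left_mono) auto
  also have "\<dots> \<le> LLcal L \<alpha> \<gamma> cl p0 p"
    unfolding LLcal_def by (rule Max_ge) auto
  finally show ?thesis unfolding global_weight_def .
qed

lemma LLcal_ge_cluster:
  fixes cl :: "'n::finite \<Rightarrow> 'k::finite"
  assumes "0 \<le> 2 * (1 - \<alpha> (cl i)) / (p0 + 2 * (1 - p0) * p (cl i))"
  shows "2 * (1 - \<alpha> (cl i)) * \<gamma> i / (p0 + 2 * (1 - p0) * p (cl i)) \<le> LLcal L \<alpha> \<gamma> cl p0 p"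
proof -
  let ?c = "2 * (1 - \<alpha> (cl i)) / (p0 + 2 * (1 - p0) * p (cl i))"
  have "\<gamma> i \<le> Max (\<gamma> ` {i'. cl i' = cl i})"
    by (rule Max_ge) auto
  then have "?c * \<gamma> i \<le> ?c * Max (\<gamma> ` {i'. cl i' = cl i})"
    using assms by (intro mult_left_mono) auto
  also have "\<dots> \<le> Max ((\<lambda>j. 2 * (1 - \<alpha> j) * Max (\<gamma> ` {i. cl i = j}) / (p0 + 2 * (1 - p0) * p j)) ` UNIV)"
    by (rule order.trans[OF _ Max_ge[of _ "2 * (1 - \<alpha> (cl i)) * Max (\<gamma> ` {i'. cl i' = cl i})
        / (p0 + 2 * (1 - p0) * p (cl i))"]]) auto
  also have "\<dots> \<le> LLcal L \<alpha> \<gamma> cl p0 p"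
    unfolding LLcal_def by (rule Max_ge) auto
  finally show ?thesis by simp
qed

lemma LLcal_ge_smooth:
  fixes cl :: "'n::finite \<Rightarrow> 'k::finite"
  assumes "0 \<le> L" "p0 < 1"
  shows "L / ((1 - p0) * (1 - p j)) \<le> LLcal L \<alpha> \<gamma> cl p0 p"
proof -
  have "1 / (1 - p j) \<le> Max ((\<lambda>j. 1 / (1 - p j)) ` UNIV)"
    by (rule Max_ge) auto
  then have "L / (1 - p0) * (1 / (1 - p j)) \<le> L / (1 - p0) * Max ((\<lambda>j. 1 / (1 - p j)) ` UNIV)"
    using assms by (intro mult_left_mono) auto
  also have "\<dots> \<le> LLcal L \<alpha> \<gamma> cl p0 p"
    unfolding LLcal_def by (rule Max_ge) auto
  finally show ?thesis by simp
qed

lemma client_bound_le_LLcal: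
  fixes f :: "'n::finite \<Rightarrow> 'd::euclidean_space \<Rightarrow> real" and cl :: "'n \<Rightarrow> 'k::finite"
  assumes p0: "0 < p0" "p0 < 1" and p: "0 < p (cl i)" "p (cl i) < 1"
    and \<alpha>: "0 \<le> \<alpha> (cl i)" "\<alpha> (cl i) \<le> 1" and \<gamma>: "0 < \<gamma> i"
    and sc: "strongly_convex \<mu> (f i)" "0 \<le> \<mu>" and sm: "smooth L (f i)" "0 < L"
  shows "client_bound p0 (p (cl i)) (\<alpha> (cl i)) (wvar_grad (global_weight \<alpha> \<gamma> cl) e $ i)
      (wvar_grad (cluster_weight \<gamma> cl (cl i)) e $ i) (grad (f i) x - grad (f i) y)
    \<le> LLcal L \<alpha> \<gamma> cl p0 p * (global_weight \<alpha> \<gamma> cl i * (norm (e $ i - wmean (global_weight \<alpha> \<gamma> cl) e))\<^sup>2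
        + (1 - \<alpha> (cl i)) * \<gamma> i * (norm (e $ i - wmean (cluster_weight \<gamma> cl (cl i)) e))\<^sup>2)
      + 2 * LLcal L \<alpha> \<gamma> cl p0 p * bregman (f i) x y"
proof -
  let ?LL = "LLcal L \<alpha> \<gamma> cl p0 p" and ?w = "global_weight \<alpha> \<gamma> cl i"
    and ?D = "p0 + 2 * (1 - p0) * p (cl i)"
  let ?Qw = "(norm (e $ i - wmean (global_weight \<alpha> \<gamma> cl) e))\<^sup>2"
    and ?Qc = "(norm (e $ i - wmean (cluster_weight \<gamma> cl (cl i)) e))\<^sup>2"
  have D: "0 < ?D" using p0 p by (simp add: add_pos_nonneg)
  have "2 / p0 * (norm (wvar_grad (global_weight \<alpha> \<gamma> cl) e $ i))\<^sup>2 = (2 / p0 * ?w) * (?w * ?Qw)"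
    unfolding wvar_grad_def by (simp add: power2_norm_scaleR power2_eq_square)
  also have "\<dots> \<le> ?LL * (?w * ?Qw)"
    using LLcal_ge_global[OF p0(1)] \<alpha> \<gamma> by (intro mult_right_mono) (auto simp: global_weight_def)
  finally have U: "2 / p0 * (norm (wvar_grad (global_weight \<alpha> \<gamma> cl) e $ i))\<^sup>2 \<le> ?LL * (?w * ?Qw)" .
  have "2 * (1 - \<alpha> (cl i))\<^sup>2 / ?D * (norm (wvar_grad (cluster_weight \<gamma> cl (cl i)) e $ i))\<^sup>2
      = (2 * (1 - \<alpha> (cl i)) * \<gamma> i / ?D) * ((1 - \<alpha> (cl i)) * \<gamma> i * ?Qc)"
    unfolding wvar_grad_def cluster_weight_def by (simp add: power2_norm_scaleR power2_eq_square)
  also have "\<dots> \<le> ?LL * ((1 - \<alpha> (cl i)) * \<gamma> i * ?Qc)"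
    using LLcal_ge_cluster[of \<alpha> cl i p0 p \<gamma> L] \<alpha> \<gamma> D by (intro mult_right_mono) auto
  finally have V: "2 * (1 - \<alpha> (cl i))\<^sup>2 / ?D * (norm (wvar_grad (cluster_weight \<gamma> cl (cl i)) e $ i))\<^sup>2
      \<le> ?LL * ((1 - \<alpha> (cl i)) * \<gamma> i * ?Qc)" .
  have q: "0 < (1 - p0) * (1 - p (cl i))" using p0 p by simp
  have "1 / ((1 - p0) * (1 - p (cl i))) * (norm (grad (f i) x - grad (f i) y))\<^sup>2
      \<le> 1 / ((1 - p0) * (1 - p (cl i))) * (2 * L * bregman (f i) x y)"
    using power2_norm_grad_diff_le_bregman[OF sc sm] q by (intro mult_left_mono) auto
  also have "\<dots> = 2 * (L / ((1 - p0) * (1 - p (cl i)))) * bregman (f i) x y" by simp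
  also have "\<dots> \<le> 2 * ?LL * bregman (f i) x y"
    using LLcal_ge_smooth[of L p0 p "cl i" \<alpha> \<gamma> cl] p0 sm(2) sc
      bregman_nonneg[OF sc] sm(1)[unfolded smooth_def]
    by (intro mult_right_mono) auto
  finally have g: "1 / ((1 - p0) * (1 - p (cl i))) * (norm (grad (f i) x - grad (f i) y))\<^sup>2
      \<le> 2 * ?LL * bregman (f i) x y" .
  show ?thesis
    unfolding client_bound_def using add_mono[OF add_mono[OF U V] g] by (simp add: distrib_left)
qed

lemma moment_bound_diff_le_Fobj_gap:
  fixes f :: "'n::finite \<Rightarrow> 'd::euclidean_space \<Rightarrow> real" and cl :: "'n \<Rightarrow> 'k::finite"
  assumes p0: "0 < p0" "p0 < 1" and p: "\<And>j. 0 < p j \<and> p j < 1"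
    and \<alpha>: "\<And>j. 0 \<le> \<alpha> j \<and> \<alpha> j \<le> 1" and \<gamma>: "\<And>i. 0 < \<gamma> i"
    and sc: "\<And>i. strongly_convex \<mu> (f i)" "0 \<le> \<mu>" and sm: "\<And>i. smooth L (f i)" "0 < L"
    and wc: "\<And>j. (\<Sum>i\<in>UNIV. cluster_weight \<gamma> cl j i) \<noteq> 0"
    and wg: "(\<Sum>i\<in>UNIV. global_weight \<alpha> \<gamma> cl i) \<noteq> 0"
    and min: "\<forall>\<Theta>'. Fobj f \<alpha> \<gamma> cl \<Theta>h \<le> Fobj f \<alpha> \<gamma> cl \<Theta>'"
  shows "moment_bound \<alpha> \<gamma> cl p0 p (\<Theta> - \<Theta>h) (stacked_grad f \<Theta> - stacked_grad f \<Theta>h)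
    \<le> 2 * LLcal L \<alpha> \<gamma> cl p0 p * (Fobj f \<alpha> \<gamma> cl \<Theta> - Fobj f \<alpha> \<gamma> cl \<Theta>h)"
proof -
  let ?LL = "LLcal L \<alpha> \<gamma> cl p0 p" and ?e = "\<Theta> - \<Theta>h"
    and ?w = "global_weight \<alpha> \<gamma> cl" and ?c = "cluster_weight \<gamma> cl"
  have grads: "(stacked_grad f \<Theta> - stacked_grad f \<Theta>h) $ i = grad (f i) (\<Theta> $ i) - grad (f i) (\<Theta>h $ i)" for i
    by (simp add: stacked_grad_def)
  have "moment_bound \<alpha> \<gamma> cl p0 p ?e (stacked_grad f \<Theta> - stacked_grad f \<Theta>h)
    \<le> (\<Sum>i\<in>UNIV. ?LL * (?w i * (norm (?e $ i - wmean ?w ?e))\<^sup>2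
        + (1 - \<alpha> (cl i)) * \<gamma> i * (norm (?e $ i - wmean (?c (cl i)) ?e))\<^sup>2)
      + 2 * ?LL * bregman (f i) (\<Theta> $ i) (\<Theta>h $ i))"
    unfolding moment_bound_def grads
    by (intro sum_mono client_bound_le_LLcal) (use p0 p \<alpha> \<gamma> sc sm in auto)
  also have "\<dots> = 2 * ?LL * (wvar ?w ?e + (\<Sum>j\<in>UNIV. (1 - \<alpha> j) * wvar (?c j) ?e)
      + (\<Sum>i\<in>UNIV. bregman (f i) (\<Theta> $ i) (\<Theta>h $ i)))"
    unfolding sum.distrib sum_distrib_left[symmetric] distrib_left[symmetric]
      sum_cluster_dispersions
    by (simp add: wvar_def algebra_simps)
  also have "\<dots> = 2 * ?LL * (Fobj f \<alpha> \<gamma> cl \<Theta> - Fobj f \<alpha> \<gamma> cl \<Theta>h)"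
    using sm(1) unfolding smooth_def by (simp add: Fobj_gap_eq[OF _ wc wg min])
  finally show ?thesis .
qed

theorem mainTheorem7:
  fixes f :: "'n::finite \<Rightarrow> 'd::euclidean_space \<Rightarrow> real"
    and cl :: "'n \<Rightarrow> 'k::finite"
    and \<gamma> :: "'n \<Rightarrow> real" and \<alpha> :: "'k \<Rightarrow> real"
    and \<mu> L p0 :: real and p \<tau> :: "'k \<Rightarrow> real"
    and \<Theta>h \<Theta> :: "'d^'n"
  assumes clusters_nonempty: "surj cl"
    and mu_pos: "0 < \<mu>" and mu_le_L: "\<mu> \<le> L"
    and f_sc: "\<And>i. strongly_convex \<mu> (f i)"
    and f_smooth: "\<And>i. smooth L (f i)"
    and gamma_pos: "\<And>i. 0 < \<gamma> i"
    and alpha_range: "\<And>j. 0 \<le> \<alpha> j \<and> \<alpha> j \<le> 1"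
    and alpha_nz: "\<exists>j. \<alpha> j \<noteq> 0"
    and minimizer: "\<forall>\<Theta>'. Fobj f \<alpha> \<gamma> cl \<Theta>h \<le> Fobj f \<alpha> \<gamma> cl \<Theta>'"
    and p0_range: "0 < p0" "p0 < 1"
    and p_range: "\<And>j. 0 < p j \<and> p j < 1"
    and tau_def: "\<And>j. \<tau> j = p0 / (p0 + 2 * (1 - p0) * p j)"
  shows "EGsq f \<alpha> \<gamma> cl p0 p \<tau> \<Theta>
           \<le> 4 * LLcal L \<alpha> \<gamma> cl p0 p * (Fobj f \<alpha> \<gamma> cl \<Theta> - Fobj f \<alpha> \<gamma> cl \<Theta>h)
             + 2 * sigma2 f \<alpha> \<gamma> cl p0 p \<Theta>h"
proof -
  have diff: "\<And>i x. f i differentiable (at x)" using f_smooth unfolding smooth_def by auto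
  have wc: "(\<Sum>i\<in>UNIV. cluster_weight \<gamma> cl j i) \<noteq> 0" for j
    using sum_cluster_weight_pos[of cl \<gamma> j, OF clusters_nonempty gamma_pos] by linarith
  obtain j0 where "\<alpha> j0 \<noteq> 0" using alpha_nz by blast
  then have wg: "(\<Sum>i\<in>UNIV. global_weight \<alpha> \<gamma> cl i) \<noteq> 0"
    using sum_global_weight_pos[of cl \<gamma> \<alpha> j0, OF clusters_nonempty gamma_pos] alpha_range
    by fastforce
  have "EGsq f \<alpha> \<gamma> cl p0 p \<tau> \<Theta>
    \<le> 2 * moment_bound \<alpha> \<gamma> cl p0 p (\<Theta> - \<Theta>h) (stacked_grad f \<Theta> - stacked_grad f \<Theta>h)
      + 2 * moment_bound \<alpha> \<gamma> cl p0 p \<Theta>h (stacked_grad f \<Theta>h)"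
    by (rule EGsq_le_moment_bounds[OF p0_range p_range tau_def])
  also have "moment_bound \<alpha> \<gamma> cl p0 p (\<Theta> - \<Theta>h) (stacked_grad f \<Theta> - stacked_grad f \<Theta>h)
      \<le> 2 * LLcal L \<alpha> \<gamma> cl p0 p * (Fobj f \<alpha> \<gamma> cl \<Theta> - Fobj f \<alpha> \<gamma> cl \<Theta>h)"
    using mu_pos mu_le_L
    by (intro moment_bound_diff_le_Fobj_gap[OF p0_range p_range alpha_range gamma_pos f_sc _ f_smooth
          _ wc wg minimizer]) auto
  also have "moment_bound \<alpha> \<gamma> cl p0 p \<Theta>h (stacked_grad f \<Theta>h) = sigma2 f \<alpha> \<gamma> cl p0 p \<Theta>h"
    by (rule sigma2_eq_moment_bound[OF diff wc wg, symmetric])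
  finally show ?thesis by simp
qed

end
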